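(* Let $\mathbb{K}$ be a topological field, $d\in\mathbb{N}$, $F$ a topological $\mathbb{K}$-vector space, $U\subseteq\mathbb{K}^d$ open or of the form $U_1\times\cdots\times U_d$ with $U_i\subseteq\mathbb{K}$ having dense interior, and $f\colon U\to F$. If $f$ is $C^k_{SDS}$ for some $k\in\mathbb{N}_0$ (resp., if $\mathbb{K}$ is a valued field and $f$ is $C^{k,\sigma}_{SDS}$ for some $\sigma>0$), then for each $\alpha\in\mathbb{N}_0^d$ with $|\alpha|\le k$ the map $f^{<\alpha>}\colon U^{<\alpha>}\to F$ is $C^{k-|\alpha|}_{SDS}$ (resp., $C^{k-|\alpha|,\sigma}_{SDS}$).
   Context: Topological fields are Hausdorff and non-discrete; vector spaces Hausdorff; valued field: absolute value defining a non-discrete topology. For $\alpha\in\mathbb{N}_0^d$, $|\alpha|=\sum\alpha_i$; write $x\in\mathbb{K}^{d+|\alpha|}$ as $(x^{(1)},\ldots,x^{(d)})$, $x^{(i)}=(x^{(i)}_0,\ldots,x^{(i)}_{\alpha_i})$. $U^{<\alpha>}$: set of $x$ with $(x^{(1)}_{i_1},\ldots,x^{(d)}_{i_d})\in U$ for all $0\le i_\ell\le\alpha_\ell$ (this is open, resp. a product of sets with dense interior, in $\mathbb{K}^{d+|\alpha|}$, so the same definitions apply to maps on it with $d$ replaced by $d+|\alpha|$); $U^{>\alpha<}$: those $x$ whose entries within each block $x^{(i)}$ are pairwise distinct. $f^{>0<}=f$ and $f^{>\alpha<}(x)=\sum_{j_1=0}^{\alpha_1}\cdots\sum_{j_d=0}^{\alpha_d}\big(\prod_{\ell=1}^d\prod_{k_\ell\neq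 j_\ell}(x^{(\ell)}_{j_\ell}-x^{(\ell)}_{k_\ell})^{-1}\big)f(x^{(1)}_{j_1},\ldots,x^{(d)}_{j_d})$. $f$ is $C^0_{SDS}$ if continuous ($f^{<0>}=f$); $C^k_{SDS}$ if $C^{k-1}_{SDS}$ and for all $|\alpha|=k$, $f^{>\alpha<}$ extends continuously to $f^{<\alpha>}\colon U^{<\alpha>}\to F$. Gauge on a vector space $E$ over a valued field: $q\colon E\to[0,\infty[$, $q(tx)=|t|q(x)$, each $\{q<r\}$ a $0$-neighbourhood. $g$ on $V\subseteq E$ is $C^{0,\sigma}$ if for each $x_0\in V$ and gauge $q$ on $F$ there are a gauge $p$ on $E$ and a neighbourhood $W$ of $x_0$ in $V$ with $q(g(y)-g(x))\le p(y-x)^\sigma$ for $x,y\in W$. $C^{k,\sigma}_{SDS}$: $C^k_{SDS}$ with each $f^{<\alpha>}$, $|\alpha|\le k$, $C^{0,\sigma}$. *)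

theory Defs
  imports "HOL-Analysis.Analysis"
begin

definition top_field :: "('k::{field,t2_space}) itself \<Rightarrow> bool" where
  "top_field _ \<longleftrightarrow>
     continuous_on UNIV (\<lambda>p::'k \<times> 'k. fst p + snd p) \<and>
     continuous_on UNIV (\<lambda>p::'k \<times> 'k. fst p * snd p) \<and>
     continuous_on UNIV (\<lambda>x::'k. - x) \<and>
     continuous_on (UNIV - {0}) (\<lambda>x::'k. inverse x) \<and>
     \<not> open {0::'k}"

definition top_vector_space :: "('k::{field,t2_space} \<Rightarrow> 'f::{ab_group_add,t2_space} \<Rightarrow> 'f) \<Rightarrow> bool" where
  "top_vector_space smul \<longleftrightarrow>
     vector_space smul \<and>
     continuous_on UNIV (\<lambda>p::'f \<times> 'f. fst p + snd p) \<and>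
     continuous_on UNIV (\<lambda>p::'k \<times> 'f. smul (fst p) (snd p))"

definition valued_field :: "('k::{field,t2_space} \<Rightarrow> real) \<Rightarrow> bool" where
  "valued_field absv \<longleftrightarrow>
     (\<forall>x. 0 \<le> absv x) \<and> (\<forall>x. absv x = 0 \<longleftrightarrow> x = 0) \<and>
     (\<forall>x y. absv (x * y) = absv x * absv y) \<and>
     (\<forall>x y. absv (x + y) \<le> absv x + absv y) \<and>
     (\<forall>S::'k set. open S \<longleftrightarrow> (\<forall>x\<in>S. \<exists>e>0. \<forall>y. absv (y - x) < e \<longrightarrow> y \<in> S))"

text \<open>K^n is modelled as extensional functions on {..<n} with the product topology.\<close>
definition Kn :: "nat \<Rightarrow> (nat \<Rightarrow> 'k::topological_space) topology" where
  "Kn n = product_topology (\<lambda>_. euclidean) {..<n}"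

definition vzero :: "nat \<Rightarrow> nat \<Rightarrow> 'k::field" where
  "vzero n = restrict (\<lambda>i. 0) {..<n}"

definition vscale :: "nat \<Rightarrow> 'k::field \<Rightarrow> (nat \<Rightarrow> 'k) \<Rightarrow> nat \<Rightarrow> 'k" where
  "vscale n t x = restrict (\<lambda>i. t * x i) {..<n}"

definition vdiff :: "nat \<Rightarrow> (nat \<Rightarrow> 'k::field) \<Rightarrow> (nat \<Rightarrow> 'k) \<Rightarrow> nat \<Rightarrow> 'k" where
  "vdiff n y x = restrict (\<lambda>i. y i - x i) {..<n}"

text \<open>A multi-index alpha in N_0^d is a function nat => nat of which only the values
  at 0..d-1 matter; |alpha| is their sum.\<close>
definition absm :: "nat \<Rightarrow> (nat \<Rightarrow> nat) \<Rightarrow> nat" where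
  "absm d \<alpha> = (\<Sum>i<d. \<alpha> i)"

text \<open>Position of the entry x^(i)_j (0-based block i, 0 <= j <= alpha i) in a point of K^(d+|alpha|).\<close>
definition bpos :: "(nat \<Rightarrow> nat) \<Rightarrow> nat \<Rightarrow> nat \<Rightarrow> nat" where
  "bpos \<alpha> i j = (\<Sum>l<i. Suc (\<alpha> l)) + j"

definition idx :: "nat \<Rightarrow> (nat \<Rightarrow> nat) \<Rightarrow> (nat \<Rightarrow> nat) set" where
  "idx d \<alpha> = PiE {..<d} (\<lambda>i. {..\<alpha> i})"

definition pick :: "nat \<Rightarrow> (nat \<Rightarrow> nat) \<Rightarrow> (nat \<Rightarrow> 'k) \<Rightarrow> (nat \<Rightarrow> nat) \<Rightarrow> nat \<Rightarrow> 'k" where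
  "pick d \<alpha> x j = restrict (\<lambda>i. x (bpos \<alpha> i (j i))) {..<d}"

definition Ulow :: "nat \<Rightarrow> (nat \<Rightarrow> 'k::topological_space) set \<Rightarrow> (nat \<Rightarrow> nat) \<Rightarrow> (nat \<Rightarrow> 'k) set" where
  "Ulow d U \<alpha> = {x \<in> topspace (Kn (d + absm d \<alpha>)). \<forall>j\<in>idx d \<alpha>. pick d \<alpha> x j \<in> U}"

definition Ugt :: "nat \<Rightarrow> (nat \<Rightarrow> 'k::topological_space) set \<Rightarrow> (nat \<Rightarrow> nat) \<Rightarrow> (nat \<Rightarrow> 'k) set" where
  "Ugt d U \<alpha> = {x \<in> Ulow d U \<alpha>. \<forall>i<d. \<forall>a\<le>\<alpha> i. \<forall>b\<le>\<alpha> i. a \<noteq> b \<longrightarrow> x (bpos \<alpha> i a) \<noteq> x (bpos \<alpha> i b)}"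

definition ddiff :: "('k::field \<Rightarrow> 'f \<Rightarrow> 'f::ab_group_add) \<Rightarrow> nat \<Rightarrow> (nat \<Rightarrow> nat)
    \<Rightarrow> ((nat \<Rightarrow> 'k) \<Rightarrow> 'f) \<Rightarrow> (nat \<Rightarrow> 'k) \<Rightarrow> 'f" where
  "ddiff smul d \<alpha> f x =
     (\<Sum>j\<in>idx d \<alpha>.
        smul (\<Prod>l<d. \<Prod>k\<in>{..\<alpha> l} - {j l}. inverse (x (bpos \<alpha> l (j l)) - x (bpos \<alpha> l k)))
             (f (pick d \<alpha> x j)))"

definition is_sds_ext :: "('k::{field,topological_space} \<Rightarrow> 'f \<Rightarrow> 'f::{ab_group_add,topological_space})
    \<Rightarrow> nat \<Rightarrow> (nat \<Rightarrow> 'k) set \<Rightarrow> (nat \<Rightarrow> nat) \<Rightarrow> ((nat \<Rightarrow> 'k) \<Rightarrow> 'f) \<Rightarrow> ((nat \<Rightarrow> 'k) \<Rightarrow> 'f) \<Rightarrow> bool" where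
  "is_sds_ext smul d U \<alpha> f g \<longleftrightarrow>
     continuous_map (subtopology (Kn (d + absm d \<alpha>)) (Ulow d U \<alpha>)) euclidean g \<and>
     (\<forall>x\<in>Ugt d U \<alpha>. g x = ddiff smul d \<alpha> f x)"

text \<open>f^<alpha>: the (unique, under the standing hypotheses) continuous extension.\<close>
definition sds_ext :: "('k::{field,topological_space} \<Rightarrow> 'f \<Rightarrow> 'f::{ab_group_add,topological_space})
    \<Rightarrow> nat \<Rightarrow> (nat \<Rightarrow> 'k) set \<Rightarrow> (nat \<Rightarrow> nat) \<Rightarrow> ((nat \<Rightarrow> 'k) \<Rightarrow> 'f) \<Rightarrow> (nat \<Rightarrow> 'k) \<Rightarrow> 'f" where
  "sds_ext smul d U \<alpha> f = (SOME g. is_sds_ext smul d U \<alpha> f g)"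

text \<open>C^k_SDS (the recursive definition unfolded: f^>alpha< extends continuously for all
  |alpha| <= k; for alpha = 0 this is continuity of f on U).\<close>
definition CkSDS :: "('k::{field,topological_space} \<Rightarrow> 'f \<Rightarrow> 'f::{ab_group_add,topological_space})
    \<Rightarrow> nat \<Rightarrow> (nat \<Rightarrow> 'k) set \<Rightarrow> nat \<Rightarrow> ((nat \<Rightarrow> 'k) \<Rightarrow> 'f) \<Rightarrow> bool" where
  "CkSDS smul d U k f \<longleftrightarrow> (\<forall>\<alpha>. absm d \<alpha> \<le> k \<longrightarrow> (\<exists>g. is_sds_ext smul d U \<alpha> f g))"

definition gauge_F :: "('k \<Rightarrow> real) \<Rightarrow> ('k \<Rightarrow> 'f \<Rightarrow> 'f::{ab_group_add,topological_space}) \<Rightarrow> ('f \<Rightarrow> real) \<Rightarrow> bool" where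
  "gauge_F absv smul q \<longleftrightarrow>
     (\<forall>x. 0 \<le> q x) \<and> (\<forall>t x. q (smul t x) = absv t * q x) \<and>
     (\<forall>r>0. \<exists>V. open V \<and> 0 \<in> V \<and> V \<subseteq> {x. q x < r})"

definition gauge_Kn :: "('k::{field,topological_space} \<Rightarrow> real) \<Rightarrow> nat \<Rightarrow> ((nat \<Rightarrow> 'k) \<Rightarrow> real) \<Rightarrow> bool" where
  "gauge_Kn absv n p \<longleftrightarrow>
     (\<forall>x\<in>topspace (Kn n). 0 \<le> p x) \<and>
     (\<forall>t. \<forall>x\<in>topspace (Kn n). p (vscale n t x) = absv t * p x) \<and>
     (\<forall>r>0. \<exists>V. openin (Kn n) V \<and> vzero n \<in> V \<and> V \<subseteq> {x. p x < r})"

definition C0sigma :: "('k::{field,topological_space} \<Rightarrow> real) \<Rightarrow> ('k \<Rightarrow> 'f \<Rightarrow> 'f::{ab_group_add,topological_space})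
    \<Rightarrow> nat \<Rightarrow> real \<Rightarrow> (nat \<Rightarrow> 'k) set \<Rightarrow> ((nat \<Rightarrow> 'k) \<Rightarrow> 'f) \<Rightarrow> bool" where
  "C0sigma absv smul n \<sigma> V g \<longleftrightarrow>
     (\<forall>x0\<in>V. \<forall>q. gauge_F absv smul q \<longrightarrow>
        (\<exists>p W. gauge_Kn absv n p \<and> openin (Kn n) W \<and> x0 \<in> W \<and>
           (\<forall>x\<in>W \<inter> V. \<forall>y\<in>W \<inter> V. q (g y - g x) \<le> p (vdiff n y x) powr \<sigma>)))"

definition CksigmaSDS :: "('k::{field,topological_space} \<Rightarrow> real) \<Rightarrow> ('k \<Rightarrow> 'f \<Rightarrow> 'f::{ab_group_add,topological_space})
    \<Rightarrow> nat \<Rightarrow> (nat \<Rightarrow> 'k) set \<Rightarrow> nat \<Rightarrow> real \<Rightarrow> ((nat \<Rightarrow> 'k) \<Rightarrow> 'f) \<Rightarrow> bool" where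
  "CksigmaSDS absv smul d U k \<sigma> f \<longleftrightarrow>
     CkSDS smul d U k f \<and>
     (\<forall>\<alpha>. absm d \<alpha> \<le> k \<longrightarrow>
        C0sigma absv smul (d + absm d \<alpha>) \<sigma> (Ulow d U \<alpha>) (sds_ext smul d U \<alpha> f))"

definition admissible_domain :: "nat \<Rightarrow> (nat \<Rightarrow> 'k::topological_space) set \<Rightarrow> bool" where
  "admissible_domain d U \<longleftrightarrow>
     openin (Kn d) U \<or>
     (\<exists>Us::nat \<Rightarrow> 'k set. U = PiE {..<d} Us \<and> (\<forall>i<d. Us i \<subseteq> closure (interior (Us i))))"

end

theory Submission
  imports Defs
begin

text \<open>
  Write gamma = mcomp alpha beta for the multi-index in which every entry x^(i)_k of a point
  of U^<alpha> is replaced by the block of beta_(bpos alpha i k) + 1 entries that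
  (U^<alpha>)^<beta> attaches to that coordinate. Then (U^<alpha>)^<beta> = U^<gamma> and
  |gamma| = |alpha| + |beta|. At points whose coordinates are pairwise distinct, the beta-th
  divided difference of f^>alpha< is f^>gamma<: after regrouping, the coefficient of each value
  of f factors over the blocks of gamma, and every factor is an instance of the partial-fraction
  identity  sum_s prod_(r ~= s) 1/(tau_s - tau_r) * 1/(t - tau_s) = prod_s 1/(t - tau_s).
  Since the field is not discrete, nonempty open sets are infinite, so points with distinct
  coordinates are dense in U^<gamma> for an admissible U. Hence f^<gamma> is a continuous
  extension of (f^<alpha>)^>beta<, and by density it is the only one: (f^<alpha>)^<beta> =
  f^<gamma> on U^<gamma>. Both the C^(k-|alpha|) and the Hoelder statement follow from this.
\<close>

section \<open>Block offsets and composite multi-indices\<close>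

definition block_start :: "(nat \<Rightarrow> nat) \<Rightarrow> nat \<Rightarrow> nat" where
  "block_start sz k = (\<Sum>l<k. sz l)"

lemma block_start_0 [simp]: "block_start sz 0 = 0"
  by (simp add: block_start_def)

lemma block_start_Suc [simp]: "block_start sz (Suc k) = block_start sz k + sz k"
  by (simp add: block_start_def)

lemma block_start_mono: "k \<le> k' \<Longrightarrow> block_start sz k \<le> block_start sz k'"
  unfolding block_start_def by (rule sum_mono2) auto

lemma block_start_add_inj:
  assumes "s < sz k" "s' < sz k'" "block_start sz k + s = block_start sz k' + s'"
  shows "k = k' \<and> s = s'"
proof -
  have False if "a < b" "s\<^sub>1 < sz a" "block_start sz a + s\<^sub>1 = block_start sz b + s\<^sub>2" for a b s\<^sub>1 s\<^sub>2
    using block_start_mono[of "Suc a" b sz] that by simp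
  then have "k = k'" using assms by (metis linorder_neqE_nat)
  then show ?thesis using assms by simp
qed

lemma block_start_decompose: "q < block_start sz a \<Longrightarrow> \<exists>k<a. \<exists>s<sz k. q = block_start sz k + s"
proof (induction a)
  case (Suc a)
  show ?case
  proof (cases "q < block_start sz a")
    case True
    then show ?thesis using Suc.IH less_SucI by blast
  next
    case False
    then have "q = block_start sz a + (q - block_start sz a)" "q - block_start sz a < sz a"
      using Suc.prems by auto
    then show ?thesis by blast
  qed
qed simp

lemma bij_betw_block_start:
  "bij_betw (\<lambda>(k, s). block_start sz k + s) (SIGMA k:{..<a}. {..<sz k}) {..<block_start sz a}"
  unfolding bij_betw_def
proof
  show "inj_on (\<lambda>(k, s). block_start sz k + s) (SIGMA k:{..<a}. {..<sz k})"
    by (auto simp: inj_on_def dest: block_start_add_inj)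
  have "block_start sz k + s < block_start sz a" if "k < a" "s < sz k" for k s
    using block_start_mono[of "Suc k" a sz] that by simp
  then show "(\<lambda>(k, s). block_start sz k + s) ` (SIGMA k:{..<a}. {..<sz k}) = {..<block_start sz a}"
    by (auto simp: image_iff dest!: block_start_decompose)
qed

lemma bpos_block_start: "bpos \<alpha> i k = block_start (\<lambda>l. Suc (\<alpha> l)) i + k"
  by (simp add: bpos_def block_start_def)

lemma bpos_end: "bpos \<alpha> d 0 = d + absm d \<alpha>"
  by (simp add: bpos_def absm_def sum_Suc)

lemma bij_betw_bpos:
  "bij_betw (\<lambda>(i, k). bpos \<alpha> i k) (SIGMA i:{..<d}. {..\<alpha> i}) {..<d + absm d \<alpha>}"
  using bij_betw_block_start[of "\<lambda>l. Suc (\<alpha> l)" d] bpos_end[of \<alpha> d]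
  by (simp add: bpos_block_start lessThan_Suc_atMost)

lemma bpos_less: "i < d \<Longrightarrow> k \<le> \<alpha> i \<Longrightarrow> bpos \<alpha> i k < d + absm d \<alpha>"
  using bij_betwE[OF bij_betw_bpos[where \<alpha>=\<alpha> and d=d]] by auto

lemma bpos_inj: "k \<le> \<alpha> i \<Longrightarrow> k' \<le> \<alpha> i' \<Longrightarrow> bpos \<alpha> i k = bpos \<alpha> i' k' \<Longrightarrow> i = i' \<and> k = k'"
  using block_start_add_inj[of k "\<lambda>l. Suc (\<alpha> l)" i k' i'] by (simp add: bpos_block_start)

text \<open>For alpha on K^d and beta on K^(d+|alpha|), the entry x^(i)_k of U^<alpha> becomes in
  (U^<alpha>)^<beta> a block of beta_(bpos alpha i k) + 1 entries; inside block i of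
  U^<mcomp alpha beta> it starts at position mcomp_start alpha beta i k.\<close>
definition mcomp :: "(nat \<Rightarrow> nat) \<Rightarrow> (nat \<Rightarrow> nat) \<Rightarrow> nat \<Rightarrow> nat" where
  "mcomp \<alpha> \<beta> i = \<alpha> i + (\<Sum>k\<le>\<alpha> i. \<beta> (bpos \<alpha> i k))"

definition mcomp_start :: "(nat \<Rightarrow> nat) \<Rightarrow> (nat \<Rightarrow> nat) \<Rightarrow> nat \<Rightarrow> nat \<Rightarrow> nat" where
  "mcomp_start \<alpha> \<beta> i = block_start (\<lambda>k. Suc (\<beta> (bpos \<alpha> i k)))"

lemma mcomp_start_end: "mcomp_start \<alpha> \<beta> i (Suc (\<alpha> i)) = Suc (mcomp \<alpha> \<beta> i)"
  by (simp add: mcomp_start_def block_start_def mcomp_def sum_Suc lessThan_Suc_atMost)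

lemma bij_betw_mcomp_start:
  "bij_betw (\<lambda>(k, s). mcomp_start \<alpha> \<beta> i k + s)
     (SIGMA k:{..\<alpha> i}. {..\<beta> (bpos \<alpha> i k)}) {..mcomp \<alpha> \<beta> i}"
  using bij_betw_block_start[of "\<lambda>k. Suc (\<beta> (bpos \<alpha> i k))" "Suc (\<alpha> i)"] mcomp_start_end[of \<alpha> \<beta> i]
  by (simp add: mcomp_start_def lessThan_Suc_atMost)

lemma sum_block_start:
  "(\<Sum>q<block_start sz a. \<psi> q) = (\<Sum>k<a. \<Sum>s<sz k. \<psi> (block_start sz k + s))"
  by (simp add: sum.reindex_bij_betw[OF bij_betw_block_start, symmetric] sum.Sigma split_def)

lemma sum_lessThan_add: "(\<Sum>q<a + b. \<psi> q) = (\<Sum>q<a. \<psi> q) + (\<Sum>s<b. \<psi> (a + s))"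
  for \<psi> :: "nat \<Rightarrow> 'c::comm_monoid_add"
  by (induction b) (simp_all add: add.assoc)

lemma bpos_bpos: "bpos \<beta> (bpos \<alpha> i k) r = bpos (mcomp \<alpha> \<beta>) i (mcomp_start \<alpha> \<beta> i k + r)"
proof -
  have "(\<Sum>q<bpos \<alpha> i 0. Suc (\<beta> q)) = (\<Sum>l<i. Suc (mcomp \<alpha> \<beta> l))"
    by (simp add: bpos_block_start sum_block_start flip: mcomp_start_end)
      (simp add: mcomp_start_def block_start_def bpos_block_start)
  then show ?thesis
    by (simp add: bpos_def sum_lessThan_add mcomp_start_def block_start_def)
qed

lemma dim_mcomp: "(d + absm d \<alpha>) + absm (d + absm d \<alpha>) \<beta> = d + absm d (mcomp \<alpha> \<beta>)"
  using bpos_bpos[of \<beta> \<alpha> d 0 0] by (simp add: bpos_end mcomp_start_def)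

lemma absm_mcomp: "absm d (mcomp \<alpha> \<beta>) = absm d \<alpha> + absm (d + absm d \<alpha>) \<beta>"
  using dim_mcomp[of d \<alpha> \<beta>] by simp

lemma mcomp_start_add_le:
  "k \<le> \<alpha> i \<Longrightarrow> s \<le> \<beta> (bpos \<alpha> i k) \<Longrightarrow> mcomp_start \<alpha> \<beta> i k + s \<le> mcomp \<alpha> \<beta> i"
  using bij_betwE[OF bij_betw_mcomp_start[where \<alpha>=\<alpha> and \<beta>=\<beta> and i=i]] by auto

lemma mcomp_start_add_inj:
  assumes "k \<le> \<alpha> i" "s \<le> \<beta> (bpos \<alpha> i k)" "k' \<le> \<alpha> i" "s' \<le> \<beta> (bpos \<alpha> i k')"
    and "mcomp_start \<alpha> \<beta> i k + s = mcomp_start \<alpha> \<beta> i k' + s'"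
  shows "k = k' \<and> s = s'"
  using bij_betw_imp_inj_on[OF bij_betw_mcomp_start[where \<alpha>=\<alpha> and \<beta>=\<beta> and i=i]] assms
  by (auto simp: inj_on_def)

lemma mem_idx_iff: "j \<in> idx d \<alpha> \<longleftrightarrow> (\<forall>i<d. j i \<le> \<alpha> i) \<and> (\<forall>i\<ge>d. j i = undefined)"
  by (auto simp: idx_def PiE_iff extensional_def)

lemma finite_idx [simp]: "finite (idx d \<alpha>)"
  by (simp add: idx_def finite_PiE)

definition mcomp_choice :: "(nat \<Rightarrow> nat) \<Rightarrow> (nat \<Rightarrow> nat) \<Rightarrow> nat \<Rightarrow> (nat \<Rightarrow> nat) \<Rightarrow> (nat \<Rightarrow> nat) \<Rightarrow> nat \<Rightarrow> nat" where
  "mcomp_choice \<alpha> \<beta> d j' j = restrict (\<lambda>i. mcomp_start \<alpha> \<beta> i (j i) + j' (bpos \<alpha> i (j i))) {..<d}"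

lemma pick_pick:
  assumes "j \<in> idx d \<alpha>"
  shows "pick d \<alpha> (pick (d + absm d \<alpha>) \<beta> y j') j = pick d (mcomp \<alpha> \<beta>) y (mcomp_choice \<alpha> \<beta> d j' j)"
proof
  fix i
  show "pick d \<alpha> (pick (d + absm d \<alpha>) \<beta> y j') j i = pick d (mcomp \<alpha> \<beta>) y (mcomp_choice \<alpha> \<beta> d j' j) i"
    using assms bpos_less[of i d "j i" \<alpha>]
    by (cases "i < d") (auto simp: pick_def mcomp_choice_def bpos_bpos mem_idx_iff)
qed

lemma mcomp_choice_in_idx:
  assumes "j' \<in> idx (d + absm d \<alpha>) \<beta>" "j \<in> idx d \<alpha>"
  shows "mcomp_choice \<alpha> \<beta> d j' j \<in> idx d (mcomp \<alpha> \<beta>)"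
  using assms bpos_less[of _ d _ \<alpha>]
  by (auto simp: mem_idx_iff mcomp_choice_def intro!: mcomp_start_add_le)

lemma idx_mcomp_decompose:
  assumes "m \<in> idx d (mcomp \<alpha> \<beta>)"
  obtains g u where "g \<in> idx d \<alpha>"
    and "\<forall>i<d. u i \<le> \<beta> (bpos \<alpha> i (g i)) \<and> m i = mcomp_start \<alpha> \<beta> i (g i) + u i"
proof -
  have "\<forall>i\<in>{..<d}. \<exists>ks. fst ks \<le> \<alpha> i \<and> snd ks \<le> \<beta> (bpos \<alpha> i (fst ks))
      \<and> m i = mcomp_start \<alpha> \<beta> i (fst ks) + snd ks"
  proof
    fix i assume "i \<in> {..<d}"
    then have "m i \<in> (\<lambda>(k, s). mcomp_start \<alpha> \<beta> i k + s) ` (SIGMA k:{..\<alpha> i}. {..\<beta> (bpos \<alpha> i k)})"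
      using assms bij_betw_imp_surj_on[OF bij_betw_mcomp_start] by (auto simp: mem_idx_iff)
    then show "\<exists>ks. fst ks \<le> \<alpha> i \<and> snd ks \<le> \<beta> (bpos \<alpha> i (fst ks))
        \<and> m i = mcomp_start \<alpha> \<beta> i (fst ks) + snd ks"
      by auto
  qed
  then obtain h where h: "\<And>i. i < d \<Longrightarrow> fst (h i) \<le> \<alpha> i \<and> snd (h i) \<le> \<beta> (bpos \<alpha> i (fst (h i)))
      \<and> m i = mcomp_start \<alpha> \<beta> i (fst (h i)) + snd (h i)"
    using bchoice[of "{..<d}"] by (metis lessThan_iff)
  show thesis
    by (rule that[of "restrict (fst \<circ> h) {..<d}" "snd \<circ> h"]) (use h in \<open>auto simp: mem_idx_iff\<close>)
qed

lemma mcomp_choice_PiE: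
  assumes m: "m \<in> idx d (mcomp \<alpha> \<beta>)" and g: "g \<in> idx d \<alpha>"
    and u: "\<forall>i<d. u i \<le> \<beta> (bpos \<alpha> i (g i)) \<and> m i = mcomp_start \<alpha> \<beta> i (g i) + u i"
    and j': "j' \<in> PiE {..<d + absm d \<alpha>} (\<lambda>p. {r. r \<le> \<beta> p \<and> (\<forall>i<d. p = bpos \<alpha> i (g i) \<longrightarrow> r = u i)})"
  shows "j' \<in> idx (d + absm d \<alpha>) \<beta>" and "mcomp_choice \<alpha> \<beta> d j' g = m"
proof -
  show "j' \<in> idx (d + absm d \<alpha>) \<beta>" using j' by (auto simp: idx_def PiE_iff)
  have "j' (bpos \<alpha> i (g i)) = u i" if "i < d" for i
    using j' that g bpos_less[of i d "g i" \<alpha>] by (auto simp: mem_idx_iff PiE_iff)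
  then show "mcomp_choice \<alpha> \<beta> d j' g = m"
    using m u by (auto simp: mcomp_choice_def mem_idx_iff)
qed

lemma mcomp_choice_fiber:
  assumes m: "m \<in> idx d (mcomp \<alpha> \<beta>)" and g: "g \<in> idx d \<alpha>"
    and u: "\<forall>i<d. u i \<le> \<beta> (bpos \<alpha> i (g i)) \<and> m i = mcomp_start \<alpha> \<beta> i (g i) + u i"
  shows "{x \<in> idx (d + absm d \<alpha>) \<beta> \<times> idx d \<alpha>. case_prod (mcomp_choice \<alpha> \<beta> d) x = m}
       = PiE {..<d + absm d \<alpha>} (\<lambda>p. {r. r \<le> \<beta> p \<and> (\<forall>i<d. p = bpos \<alpha> i (g i) \<longrightarrow> r = u i)}) \<times> {g}"
    (is "?fiber = PiE _ ?B \<times> _")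
proof (intro set_eqI iffI)
  fix x assume "x \<in> ?fiber"
  then obtain j' j where x: "x = (j', j)" and j': "j' \<in> idx (d + absm d \<alpha>) \<beta>" and j: "j \<in> idx d \<alpha>"
    and c: "mcomp_choice \<alpha> \<beta> d j' j = m" by auto
  have "j i = g i \<and> j' (bpos \<alpha> i (g i)) = u i" if i: "i < d" for i
  proof -
    have "j i \<le> \<alpha> i" "g i \<le> \<alpha> i" using i j g by (auto simp: mem_idx_iff)
    moreover have "j' (bpos \<alpha> i (j i)) \<le> \<beta> (bpos \<alpha> i (j i))"
      using j' bpos_less[of i d "j i" \<alpha>] i \<open>j i \<le> \<alpha> i\<close> by (auto simp: mem_idx_iff)
    moreover have "mcomp_start \<alpha> \<beta> i (j i) + j' (bpos \<alpha> i (j i)) = mcomp_start \<alpha> \<beta> i (g i) + u i"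
      using fun_cong[OF c, of i] u[rule_format, OF i] i by (simp add: mcomp_choice_def)
    ultimately show ?thesis using mcomp_start_add_inj u[rule_format, OF i] by metis
  qed
  moreover from this have "j = g"
    using j g unfolding fun_eq_iff mem_idx_iff by (metis not_less)
  ultimately show "x \<in> PiE {..<d + absm d \<alpha>} ?B \<times> {g}"
    using j' by (auto simp: x mem_idx_iff PiE_iff extensional_def)
next
  fix x assume "x \<in> PiE {..<d + absm d \<alpha>} ?B \<times> {g}"
  then show "x \<in> ?fiber" using mcomp_choice_PiE[OF m g u] g by auto
qed

lemma mcomp_choice_surj:
  assumes m: "m \<in> idx d (mcomp \<alpha> \<beta>)"
  shows "\<exists>j'\<in>idx (d + absm d \<alpha>) \<beta>. \<exists>j\<in>idx d \<alpha>. mcomp_choice \<alpha> \<beta> d j' j = m"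
proof -
  obtain g u where g: "g \<in> idx d \<alpha>"
    and u: "\<forall>i<d. u i \<le> \<beta> (bpos \<alpha> i (g i)) \<and> m i = mcomp_start \<alpha> \<beta> i (g i) + u i"
    using idx_mcomp_decompose[OF m] by blast
  let ?B = "\<lambda>p. {r. r \<le> \<beta> p \<and> (\<forall>i<d. p = bpos \<alpha> i (g i) \<longrightarrow> r = u i)}"
  have "?B p \<noteq> {}" for p
  proof (cases "\<exists>i<d. p = bpos \<alpha> i (g i)")
    case True
    then obtain i where i: "i < d" "p = bpos \<alpha> i (g i)" by blast
    have "i' = i" if "i' < d" "p = bpos \<alpha> i' (g i')" for i'
      using bpos_inj[of "g i'" \<alpha> i' "g i" i] g i that by (simp add: mem_idx_iff)
    then show ?thesis using i u by blast
  qed auto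
  then have "PiE {..<d + absm d \<alpha>} ?B \<noteq> {}"
    by (simp add: PiE_eq_empty_iff)
  then obtain j' where "j' \<in> PiE {..<d + absm d \<alpha>} ?B"
    by blast
  then show ?thesis using mcomp_choice_PiE[OF m g u] g by blast
qed

lemma pick_in_topspace: "pick n \<beta> x j \<in> topspace (Kn n)"
  by (simp add: Kn_def pick_def)

lemma Ulow_mcomp: "Ulow (d + absm d \<alpha>) (Ulow d U \<alpha>) \<beta> = Ulow d U (mcomp \<alpha> \<beta>)"
proof -
  have "(\<forall>j'\<in>idx (d + absm d \<alpha>) \<beta>. \<forall>j\<in>idx d \<alpha>. pick d (mcomp \<alpha> \<beta>) x (mcomp_choice \<alpha> \<beta> d j' j) \<in> U)
      \<longleftrightarrow> (\<forall>m\<in>idx d (mcomp \<alpha> \<beta>). pick d (mcomp \<alpha> \<beta>) x m \<in> U)" for x :: "nat \<Rightarrow> 'a"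
    using mcomp_choice_in_idx mcomp_choice_surj by metis
  then show ?thesis
    unfolding Ulow_def dim_mcomp by (auto simp: pick_in_topspace pick_pick)
qed

section \<open>Partial fractions\<close>

lemma prod_Diff_singleton_if:
  "finite A \<Longrightarrow> a \<in> A \<Longrightarrow> (\<Prod>x\<in>A - {a}. \<phi> x) = (\<Prod>x\<in>A. if x = a then 1 else \<phi> x)"
  by (simp add: prod.If_cases Int_absorb1 Diff_eq)

lemma inverse_diff_split:
  fixes x y t :: "'k::field"
  assumes "x \<noteq> y" "t \<noteq> x" "t \<noteq> y"
  shows "inverse (x - y) * inverse (t - x) = inverse (t - y) * (inverse (t - x) - inverse (y - x))"
  using assms by (simp add: inverse_eq_divide divide_simps) (simp add: algebra_simps)

lemma sum_prod_inverse_diff: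
  fixes \<tau> :: "'a \<Rightarrow> 'k::field"
  assumes "finite R" "R \<noteq> {}" "inj_on \<tau> R" "t \<notin> \<tau> ` R"
  shows "(\<Sum>s\<in>R. (\<Prod>r\<in>R - {s}. inverse (\<tau> s - \<tau> r)) * inverse (t - \<tau> s))
         = (\<Prod>s\<in>R. inverse (t - \<tau> s))"
  using assms
proof (induction R arbitrary: t rule: finite_ne_induct)
  case (insert a R)
  define w where "w s = (\<Prod>r\<in>R - {s}. inverse (\<tau> s - \<tau> r))" for s
  have inj: "inj_on \<tau> R" and a: "\<tau> a \<notin> \<tau> ` R" and t: "t \<notin> \<tau> ` R" "t \<noteq> \<tau> a"
    using insert by auto
  have "(\<Prod>r\<in>insert a R - {s}. inverse (\<tau> s - \<tau> r)) * inverse (t - \<tau> s)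
      = inverse (t - \<tau> a) * (w s * inverse (t - \<tau> s) - w s * inverse (\<tau> a - \<tau> s))"
    if s: "s \<in> R" for s
  proof -
    have "insert a R - {s} = insert a (R - {s})" using s insert.hyps by auto
    then have "(\<Prod>r\<in>insert a R - {s}. inverse (\<tau> s - \<tau> r)) * inverse (t - \<tau> s)
        = w s * (inverse (\<tau> s - \<tau> a) * inverse (t - \<tau> s))"
      using insert.hyps by (simp add: w_def mult_ac)
    also have "\<dots> = w s * (inverse (t - \<tau> a) * (inverse (t - \<tau> s) - inverse (\<tau> a - \<tau> s)))"
      using s a t by (subst inverse_diff_split) (auto simp: image_iff)
    also have "\<dots> = inverse (t - \<tau> a) * (w s * inverse (t - \<tau> s) - w s * inverse (\<tau> a - \<tau> s))"
      by (simp add: algebra_simps)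
    finally show ?thesis .
  qed
  then have "(\<Sum>s\<in>insert a R. (\<Prod>r\<in>insert a R - {s}. inverse (\<tau> s - \<tau> r)) * inverse (t - \<tau> s))
      = (\<Prod>r\<in>R. inverse (\<tau> a - \<tau> r)) * inverse (t - \<tau> a)
        + inverse (t - \<tau> a) * ((\<Sum>s\<in>R. w s * inverse (t - \<tau> s)) - (\<Sum>s\<in>R. w s * inverse (\<tau> a - \<tau> s)))"
    using insert.hyps by (simp add: insert_Diff_if flip: sum_distrib_left sum_subtractf)
  also have "\<dots> = (\<Prod>s\<in>insert a R. inverse (t - \<tau> s))"
    using insert.IH[OF inj t(1)] insert.IH[OF inj a] insert.hyps by (simp add: w_def algebra_simps)
  finally show ?case .
qed simp

lemma prod_sum_partial_fractions:
  fixes T :: "'a \<Rightarrow> 'b \<Rightarrow> 'k::field"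
  assumes "finite K" "\<And>k. k \<in> K \<Longrightarrow> finite (S k)" "\<And>k. k \<in> K \<Longrightarrow> S k \<noteq> {}"
    and inj: "inj_on (\<lambda>(k, s). T k s) (Sigma K S)" and "g \<in> K" "u \<in> S g"
  shows "(\<Prod>k\<in>K. if k = g then (\<Prod>r\<in>S g - {u}. inverse (T g u - T g r))
            else (\<Sum>s\<in>S k. (\<Prod>r\<in>S k - {s}. inverse (T k s - T k r)) * inverse (T g u - T k s)))
       = (\<Prod>(k, s)\<in>Sigma K S - {(g, u)}. inverse (T g u - T k s))"
proof -
  have "(\<Prod>(k, s)\<in>Sigma K S - {(g, u)}. inverse (T g u - T k s))
      = (\<Prod>k\<in>K. \<Prod>s\<in>S k. if (k, s) = (g, u) then 1 else inverse (T g u - T k s))"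
    using assms by (simp add: prod_Diff_singleton_if prod.Sigma split_def prod_eq_iff)
  also have "\<dots> = (\<Prod>k\<in>K. if k = g then (\<Prod>r\<in>S g - {u}. inverse (T g u - T g r))
            else (\<Sum>s\<in>S k. (\<Prod>r\<in>S k - {s}. inverse (T k s - T k r)) * inverse (T g u - T k s)))"
  proof (rule prod.cong[OF refl])
    fix k assume k: "k \<in> K"
    show "(\<Prod>s\<in>S k. if (k, s) = (g, u) then 1 else inverse (T g u - T k s))
        = (if k = g then (\<Prod>r\<in>S g - {u}. inverse (T g u - T g r))
           else (\<Sum>s\<in>S k. (\<Prod>r\<in>S k - {s}. inverse (T k s - T k r)) * inverse (T g u - T k s)))"
    proof (cases "k = g")
      case True
      then show ?thesis using assms unfolding True by (simp add: prod_Diff_singleton_if)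
    next
      case False
      have "inj_on (T k) (S k)" using inj k by (auto simp: inj_on_def)
      moreover have "T g u \<notin> T k ` S k" using inj k False assms(5,6) by (auto simp: inj_on_def)
      ultimately show ?thesis
        using False k assms(2,3) by (simp add: sum_prod_inverse_diff)
    qed
  qed
  finally show ?thesis ..
qed

lemma sum_PiE_prod_bij:
  fixes H :: "'a \<Rightarrow> 'b \<Rightarrow> 'c::comm_semiring_1"
  assumes bij: "bij_betw \<pi> I J" and "finite I" "\<And>p. p \<in> J \<Longrightarrow> finite (A p)"
  shows "(\<Sum>x\<in>PiE J A. \<Prod>i\<in>I. H i (x (\<pi> i))) = (\<Prod>i\<in>I. \<Sum>a\<in>A (\<pi> i). H i a)"
proof -
  define H' where "H' p = H (inv_into I \<pi> p)" for p
  have H': "H' (\<pi> i) = H i" if "i \<in> I" for i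
    using bij that by (simp add: H'_def bij_betw_inv_into_left)
  have fin: "finite J" using bij \<open>finite I\<close> bij_betw_finite by blast
  have "(\<Prod>i\<in>I. H i (x (\<pi> i))) = (\<Prod>p\<in>J. H' p (x p))" for x
  proof -
    have "(\<Prod>i\<in>I. H i (x (\<pi> i))) = (\<Prod>i\<in>I. H' (\<pi> i) (x (\<pi> i)))"
      by (rule prod.cong) (simp_all add: H')
    also have "\<dots> = (\<Prod>p\<in>J. H' p (x p))"
      by (rule prod.reindex_bij_betw[OF bij])
    finally show ?thesis .
  qed
  then have "(\<Sum>x\<in>PiE J A. \<Prod>i\<in>I. H i (x (\<pi> i))) = (\<Sum>x\<in>PiE J A. \<Prod>p\<in>J. H' p (x p))"
    by simp
  also have "\<dots> = (\<Prod>p\<in>J. \<Sum>a\<in>A p. H' p a)"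
    using fin assms(3) by (rule prod_sum_PiE[symmetric])
  also have "\<dots> = (\<Prod>i\<in>I. \<Sum>a\<in>A (\<pi> i). H i a)"
    using prod.reindex_bij_betw[OF bij, of "\<lambda>p. \<Sum>a\<in>A p. H' p a"] H' by simp
  finally show ?thesis .
qed

section \<open>Divided differences of divided differences\<close>

definition dd_weight :: "nat \<Rightarrow> (nat \<Rightarrow> nat) \<Rightarrow> (nat \<Rightarrow> 'k::field) \<Rightarrow> (nat \<Rightarrow> nat) \<Rightarrow> 'k" where
  "dd_weight d \<alpha> x j = (\<Prod>l<d. \<Prod>k\<in>{..\<alpha> l} - {j l}. inverse (x (bpos \<alpha> l (j l)) - x (bpos \<alpha> l k)))"

lemma ddiff_dd_weight:
  "ddiff smul d \<alpha> f x = (\<Sum>j\<in>idx d \<alpha>. smul (dd_weight d \<alpha> x j) (f (pick d \<alpha> x j)))"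
  by (simp add: ddiff_def dd_weight_def)

lemma inj_on_mcomp_nodes:
  fixes y :: "nat \<Rightarrow> 'k"
  assumes "inj_on y {..<d + absm d (mcomp \<alpha> \<beta>)}" "i < d"
  shows "inj_on (\<lambda>(k, s). y (bpos \<beta> (bpos \<alpha> i k) s)) (SIGMA k:{..\<alpha> i}. {..\<beta> (bpos \<alpha> i k)})"
proof -
  have "inj_on (\<lambda>q. y (bpos (mcomp \<alpha> \<beta>) i q)) {..mcomp \<alpha> \<beta> i}"
    using assms bpos_less[of i d _ "mcomp \<alpha> \<beta>"] bpos_inj[of _ "mcomp \<alpha> \<beta>" i _ i]
    by (auto simp: inj_on_def)
  moreover note bij = bij_betw_mcomp_start[where \<alpha>=\<alpha> and \<beta>=\<beta> and i=i]
  ultimately have "inj_on ((\<lambda>q. y (bpos (mcomp \<alpha> \<beta>) i q)) \<circ> (\<lambda>(k, s). mcomp_start \<alpha> \<beta> i k + s))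
      (SIGMA k:{..\<alpha> i}. {..\<beta> (bpos \<alpha> i k)})"
    by (intro comp_inj_on) (auto simp: bij_betw_def intro: mcomp_start_add_le)
  then show ?thesis by (simp add: o_def split_def bpos_bpos)
qed

lemma dd_weight_mul_dd_weight_pick:
  fixes y :: "nat \<Rightarrow> 'k::field" and \<beta> :: "nat \<Rightarrow> nat"
  assumes g: "g \<in> idx d \<alpha>"
  defines "T \<equiv> \<lambda>i k s. y (bpos \<beta> (bpos \<alpha> i k) s)"
  shows "dd_weight (d + absm d \<alpha>) \<beta> y j' * dd_weight d \<alpha> (pick (d + absm d \<alpha>) \<beta> y j') g
       = (\<Prod>(i, k)\<in>(SIGMA i:{..<d}. {..\<alpha> i}).
            (\<Prod>r\<in>{..\<beta> (bpos \<alpha> i k)} - {j' (bpos \<alpha> i k)}. inverse (T i k (j' (bpos \<alpha> i k)) - T i k r))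
            * (if k = g i then 1 else inverse (T i (g i) (j' (bpos \<alpha> i (g i))) - T i k (j' (bpos \<alpha> i k)))))"
proof -
  have gi: "g i \<le> \<alpha> i" if "i < d" for i using g that by (simp add: mem_idx_iff)
  have "dd_weight (d + absm d \<alpha>) \<beta> y j' = (\<Prod>(i, k)\<in>(SIGMA i:{..<d}. {..\<alpha> i}).
      \<Prod>r\<in>{..\<beta> (bpos \<alpha> i k)} - {j' (bpos \<alpha> i k)}. inverse (T i k (j' (bpos \<alpha> i k)) - T i k r))"
    unfolding dd_weight_def
    by (subst prod.reindex_bij_betw[OF bij_betw_bpos, symmetric]) (simp add: split_def T_def)
  moreover have "dd_weight d \<alpha> (pick (d + absm d \<alpha>) \<beta> y j') g = (\<Prod>i<d. \<Prod>k\<le>\<alpha> i.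
      if k = g i then 1 else inverse (T i (g i) (j' (bpos \<alpha> i (g i))) - T i k (j' (bpos \<alpha> i k))))"
    unfolding dd_weight_def using gi bpos_less[of _ d _ \<alpha>]
    by (intro prod.cong[OF refl]) (auto simp: pick_def T_def prod_Diff_singleton_if intro!: prod.cong)
  ultimately show ?thesis by (simp add: prod.Sigma split_def prod.distrib)
qed

lemma prod_block_partial_fractions:
  fixes y :: "nat \<Rightarrow> 'k::field"
  assumes inj: "inj_on y {..<d + absm d (mcomp \<alpha> \<beta>)}" and i: "i < d"
    and g: "g \<le> \<alpha> i" and u: "u \<le> \<beta> (bpos \<alpha> i g)"
  defines "T \<equiv> \<lambda>k s. y (bpos \<beta> (bpos \<alpha> i k) s)"
  shows "(\<Prod>k\<le>\<alpha> i. if k = g then (\<Prod>r\<in>{..\<beta> (bpos \<alpha> i g)} - {u}. inverse (T g u - T g r))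
            else (\<Sum>s\<le>\<beta> (bpos \<alpha> i k). (\<Prod>r\<in>{..\<beta> (bpos \<alpha> i k)} - {s}. inverse (T k s - T k r))
                    * inverse (T g u - T k s)))
       = (\<Prod>q\<in>{..mcomp \<alpha> \<beta> i} - {mcomp_start \<alpha> \<beta> i g + u}.
            inverse (y (bpos (mcomp \<alpha> \<beta>) i (mcomp_start \<alpha> \<beta> i g + u)) - y (bpos (mcomp \<alpha> \<beta>) i q)))"
proof -
  let ?S = "(SIGMA k:{..\<alpha> i}. {..\<beta> (bpos \<alpha> i k)}) - {(g, u)}"
  have "bij_betw (\<lambda>(k, s). mcomp_start \<alpha> \<beta> i k + s) ?S ({..mcomp \<alpha> \<beta> i} - {mcomp_start \<alpha> \<beta> i g + u})"
    using g u by (intro bij_betw_DiffI bij_betw_mcomp_start) (auto simp: bij_betw_def intro: mcomp_start_add_le)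
  from prod.reindex_bij_betw[OF this,
      of "\<lambda>q. inverse (y (bpos (mcomp \<alpha> \<beta>) i (mcomp_start \<alpha> \<beta> i g + u)) - y (bpos (mcomp \<alpha> \<beta>) i q))"]
  have "(\<Prod>(k, s)\<in>?S. inverse (T g u - T k s))
      = (\<Prod>q\<in>{..mcomp \<alpha> \<beta> i} - {mcomp_start \<alpha> \<beta> i g + u}.
          inverse (y (bpos (mcomp \<alpha> \<beta>) i (mcomp_start \<alpha> \<beta> i g + u)) - y (bpos (mcomp \<alpha> \<beta>) i q)))"
    by (simp add: split_def T_def bpos_bpos)
  moreover have "(\<Prod>k\<le>\<alpha> i. if k = g then (\<Prod>r\<in>{..\<beta> (bpos \<alpha> i g)} - {u}. inverse (T g u - T g r))
            else (\<Sum>s\<le>\<beta> (bpos \<alpha> i k). (\<Prod>r\<in>{..\<beta> (bpos \<alpha> i k)} - {s}. inverse (T k s - T k r))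
                    * inverse (T g u - T k s)))
      = (\<Prod>(k, s)\<in>?S. inverse (T g u - T k s))"
    using inj_on_mcomp_nodes[OF inj i] g u
    by (intro prod_sum_partial_fractions) (auto simp: T_def split_def)
  ultimately show ?thesis by simp
qed

lemma sum_fiber_dd_weight:
  fixes y :: "nat \<Rightarrow> 'k::field"
  assumes inj: "inj_on y {..<d + absm d (mcomp \<alpha> \<beta>)}" and m: "m \<in> idx d (mcomp \<alpha> \<beta>)"
  shows "(\<Sum>(j', j)\<in>{x \<in> idx (d + absm d \<alpha>) \<beta> \<times> idx d \<alpha>. case_prod (mcomp_choice \<alpha> \<beta> d) x = m}.
            dd_weight (d + absm d \<alpha>) \<beta> y j' * dd_weight d \<alpha> (pick (d + absm d \<alpha>) \<beta> y j') j)
         = dd_weight d (mcomp \<alpha> \<beta>) y m"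
proof -
  define n where "n = d + absm d \<alpha>"
  obtain g u where g: "g \<in> idx d \<alpha>"
    and u: "\<forall>i<d. u i \<le> \<beta> (bpos \<alpha> i (g i)) \<and> m i = mcomp_start \<alpha> \<beta> i (g i) + u i"
    using idx_mcomp_decompose[OF m] by blast
  have gi: "g i \<le> \<alpha> i" if "i < d" for i using g that by (simp add: mem_idx_iff)
  define B where "B p = {r. r \<le> \<beta> p \<and> (\<forall>i<d. p = bpos \<alpha> i (g i) \<longrightarrow> r = u i)}" for p
  define T where "T i k s = y (bpos \<beta> (bpos \<alpha> i k) s)" for i k s
  define H where "H i k s = (\<Prod>r\<in>{..\<beta> (bpos \<alpha> i k)} - {s}. inverse (T i k s - T i k r))
      * (if k = g i then 1 else inverse (T i (g i) (u i) - T i k s))" for i k s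
  let ?I = "SIGMA i:{..<d}. {..\<alpha> i}"
  have B_bpos: "B (bpos \<alpha> i k) = (if k = g i then {u i} else {..\<beta> (bpos \<alpha> i k)})"
    if "i < d" "k \<le> \<alpha> i" for i k
  proof -
    have "bpos \<alpha> i k = bpos \<alpha> i' (g i') \<longleftrightarrow> i' = i \<and> k = g i" if "i' < d" for i'
      using bpos_inj[of k \<alpha> i "g i'" i'] gi[OF that] \<open>k \<le> \<alpha> i\<close> by auto
    then show ?thesis using u[rule_format, OF \<open>i < d\<close>] \<open>i < d\<close> by (auto simp: B_def)
  qed
  have weights: "dd_weight n \<beta> y j' * dd_weight d \<alpha> (pick n \<beta> y j') g
      = (\<Prod>(i, k)\<in>?I. H i k (j' (bpos \<alpha> i k)))" if j': "j' \<in> PiE {..<n} B" for j'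
  proof -
    have "j' (bpos \<alpha> i (g i)) = u i" if "i < d" for i
      using j' that gi[OF that] bpos_less[of i d "g i" \<alpha>] B_bpos[of i "g i"] by (auto simp: n_def)
    then show ?thesis
      unfolding n_def dd_weight_mul_dd_weight_pick[OF g]
      by (intro prod.cong refl) (auto simp: H_def T_def)
  qed
  have block: "(\<Prod>k\<le>\<alpha> i. \<Sum>a\<in>B (bpos \<alpha> i k). H i k a)
      = (\<Prod>q\<in>{..mcomp \<alpha> \<beta> i} - {m i}. inverse (y (bpos (mcomp \<alpha> \<beta>) i (m i)) - y (bpos (mcomp \<alpha> \<beta>) i q)))"
    if i: "i < d" for i
  proof -
    have "(\<Prod>k\<le>\<alpha> i. \<Sum>a\<in>B (bpos \<alpha> i k). H i k a)
        = (\<Prod>k\<le>\<alpha> i. if k = g i then (\<Prod>r\<in>{..\<beta> (bpos \<alpha> i (g i))} - {u i}. inverse (T i (g i) (u i) - T i (g i) r))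
            else (\<Sum>s\<le>\<beta> (bpos \<alpha> i k). (\<Prod>r\<in>{..\<beta> (bpos \<alpha> i k)} - {s}. inverse (T i k s - T i k r))
                    * inverse (T i (g i) (u i) - T i k s)))"
      using i by (intro prod.cong refl) (simp add: B_bpos H_def)
    also have "\<dots> = (\<Prod>q\<in>{..mcomp \<alpha> \<beta> i} - {mcomp_start \<alpha> \<beta> i (g i) + u i}.
        inverse (y (bpos (mcomp \<alpha> \<beta>) i (mcomp_start \<alpha> \<beta> i (g i) + u i)) - y (bpos (mcomp \<alpha> \<beta>) i q)))"
      unfolding T_def using u[rule_format, OF i] by (intro prod_block_partial_fractions[OF inj i gi[OF i]]) simp
    finally show ?thesis using u[rule_format, OF i] by simp
  qed
  have "(\<Sum>(j', j)\<in>{x \<in> idx n \<beta> \<times> idx d \<alpha>. case_prod (mcomp_choice \<alpha> \<beta> d) x = m}.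
            dd_weight n \<beta> y j' * dd_weight d \<alpha> (pick n \<beta> y j') j)
      = (\<Sum>j'\<in>PiE {..<n} B. dd_weight n \<beta> y j' * dd_weight d \<alpha> (pick n \<beta> y j') g)"
    unfolding n_def mcomp_choice_fiber[OF m g u] B_def[abs_def] by (simp add: sum.cartesian_product[symmetric])
  also have "\<dots> = (\<Sum>j'\<in>PiE {..<n} B. \<Prod>(i, k)\<in>?I. H i k (j' (bpos \<alpha> i k)))"
    using weights by (rule sum.cong[OF refl])
  also have "\<dots> = (\<Prod>(i, k)\<in>?I. \<Sum>a\<in>B (bpos \<alpha> i k). H i k a)"
  proof -
    have "(\<Sum>j'\<in>PiE {..<n} B. \<Prod>p\<in>?I. (\<lambda>(i, k). H i k) p (j' ((\<lambda>(i, k). bpos \<alpha> i k) p)))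
        = (\<Prod>p\<in>?I. \<Sum>a\<in>B ((\<lambda>(i, k). bpos \<alpha> i k) p). (\<lambda>(i, k). H i k) p a)"
      unfolding n_def by (rule sum_PiE_prod_bij[OF bij_betw_bpos]) (auto simp: B_def)
    then show ?thesis by (simp add: split_def)
  qed
  also have "\<dots> = (\<Prod>i<d. \<Prod>k\<le>\<alpha> i. \<Sum>a\<in>B (bpos \<alpha> i k). H i k a)"
    by (simp add: prod.Sigma split_def)
  also have "\<dots> = dd_weight d (mcomp \<alpha> \<beta>) y m"
    unfolding dd_weight_def by (rule prod.cong[OF refl]) (simp add: block)
  finally show ?thesis by (simp add: n_def)
qed

lemma ddiff_ddiff:
  fixes smul :: "'k::field \<Rightarrow> 'f::ab_group_add \<Rightarrow> 'f"
  assumes "vector_space smul" and inj: "inj_on y {..<d + absm d (mcomp \<alpha> \<beta>)}"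
    and G: "\<And>j'. j' \<in> idx (d + absm d \<alpha>) \<beta> \<Longrightarrow>
      G (pick (d + absm d \<alpha>) \<beta> y j') = ddiff smul d \<alpha> f (pick (d + absm d \<alpha>) \<beta> y j')"
  shows "ddiff smul (d + absm d \<alpha>) \<beta> G y = ddiff smul d (mcomp \<alpha> \<beta>) f y"
proof -
  interpret vector_space smul by fact
  define n where "n = d + absm d \<alpha>"
  define \<gamma> where "\<gamma> = mcomp \<alpha> \<beta>"
  define c where "c = (\<lambda>(j', j). mcomp_choice \<alpha> \<beta> d j' j)"
  define W where "W = (\<lambda>(j', j). dd_weight n \<beta> y j' * dd_weight d \<alpha> (pick n \<beta> y j') j)"
  have "ddiff smul n \<beta> G y = (\<Sum>j'\<in>idx n \<beta>. \<Sum>j\<in>idx d \<alpha>. smul (W (j', j)) (f (pick d \<gamma> y (c (j', j)))))"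
    unfolding ddiff_dd_weight using G
    by (intro sum.cong refl)
      (auto simp: n_def W_def c_def \<gamma>_def ddiff_dd_weight scale_sum_right pick_pick intro!: sum.cong)
  also have "\<dots> = (\<Sum>x\<in>idx n \<beta> \<times> idx d \<alpha>. smul (W x) (f (pick d \<gamma> y (c x))))"
    by (simp add: sum.cartesian_product split_def)
  also have "\<dots> = (\<Sum>m\<in>idx d \<gamma>. \<Sum>x\<in>{x \<in> idx n \<beta> \<times> idx d \<alpha>. c x = m}. smul (W x) (f (pick d \<gamma> y (c x))))"
    using mcomp_choice_in_idx by (intro sum.group[symmetric]) (auto simp: n_def \<gamma>_def c_def)
  also have "\<dots> = (\<Sum>m\<in>idx d \<gamma>. smul (dd_weight d \<gamma> y m) (f (pick d \<gamma> y m)))"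
  proof (rule sum.cong[OF refl])
    fix m assume m: "m \<in> idx d \<gamma>"
    have "(\<Sum>x\<in>{x \<in> idx n \<beta> \<times> idx d \<alpha>. c x = m}. smul (W x) (f (pick d \<gamma> y (c x))))
        = smul (\<Sum>x\<in>{x \<in> idx n \<beta> \<times> idx d \<alpha>. c x = m}. W x) (f (pick d \<gamma> y m))"
      by (simp add: scale_sum_left)
    also have "\<dots> = smul (dd_weight d \<gamma> y m) (f (pick d \<gamma> y m))"
      using sum_fiber_dd_weight[OF inj m[unfolded \<gamma>_def]]
      by (simp add: n_def \<gamma>_def c_def W_def split_def)
    finally show "(\<Sum>x\<in>{x \<in> idx n \<beta> \<times> idx d \<alpha>. c x = m}. smul (W x) (f (pick d \<gamma> y (c x))))
        = smul (dd_weight d \<gamma> y m) (f (pick d \<gamma> y m))" .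
  qed
  finally show ?thesis by (simp add: ddiff_dd_weight n_def \<gamma>_def)
qed

section \<open>Continuity of divided differences\<close>

lemma continuous_map_binop:
  assumes "continuous_on UNIV (\<lambda>p. h (fst p) (snd p))"
    and "continuous_map X euclidean a" "continuous_map X euclidean b"
  shows "continuous_map X euclidean (\<lambda>x. h (a x) (b x))"
proof -
  have pair: "continuous_map X euclidean (\<lambda>x. (a x, b x))"
    using continuous_map_pairedI[OF assms(2,3)] by simp
  have "continuous_map euclidean euclidean (\<lambda>p. h (fst p) (snd p))"
    using assms(1) by simp
  from continuous_map_compose[OF pair this] show ?thesis
    by (simp add: o_def)
qed

lemma continuous_map_sum_of_continuous_add:
  fixes h :: "'j \<Rightarrow> 'x \<Rightarrow> 'a::{comm_monoid_add,topological_space}"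
  assumes "continuous_on UNIV (\<lambda>p::'a \<times> 'a. fst p + snd p)"
    and "finite A" "\<And>j. j \<in> A \<Longrightarrow> continuous_map X euclidean (h j)"
  shows "continuous_map X euclidean (\<lambda>x. \<Sum>j\<in>A. h j x)"
  using assms(2,3) by induction (simp_all add: continuous_map_binop[OF assms(1)])

lemma continuous_map_prod_of_continuous_mult:
  fixes h :: "'j \<Rightarrow> 'x \<Rightarrow> 'a::{comm_monoid_mult,topological_space}"
  assumes "continuous_on UNIV (\<lambda>p::'a \<times> 'a. fst p * snd p)"
    and "finite A" "\<And>j. j \<in> A \<Longrightarrow> continuous_map X euclidean (h j)"
  shows "continuous_map X euclidean (\<lambda>x. \<Prod>j\<in>A. h j x)"
  using assms(2,3) by induction (simp_all add: continuous_map_binop[OF assms(1)])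

lemma continuous_map_Kn_coordinate: "p < n \<Longrightarrow> continuous_map (subtopology (Kn n) L) euclidean (\<lambda>x. x p)"
  unfolding Kn_def
  by (intro continuous_map_from_subtopology continuous_map_product_projection) simp

lemma continuous_map_pick:
  assumes "j \<in> idx d \<alpha>"
  shows "continuous_map (Kn (d + absm d \<alpha>)) (Kn d) (\<lambda>x. pick d \<alpha> x j)"
  unfolding Kn_def continuous_map_componentwise
proof (intro conjI ballI)
  show "(\<lambda>x. pick d \<alpha> x j) ` topspace (product_topology (\<lambda>_. euclidean) {..<d + absm d \<alpha>}) \<subseteq> extensional {..<d}"
    by (auto simp: pick_def)
  fix i assume i: "i \<in> {..<d}"
  then have "bpos \<alpha> i (j i) \<in> {..<d + absm d \<alpha>}"
    using assms bpos_less[of i d "j i" \<alpha>] by (auto simp: mem_idx_iff)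
  from continuous_map_product_projection[OF this, of "\<lambda>_. euclidean"]
  show "continuous_map (product_topology (\<lambda>_. euclidean) {..<d + absm d \<alpha>}) euclidean (\<lambda>x. pick d \<alpha> x j i)"
    using i by (simp add: pick_def)
qed

lemma continuous_map_dd_weight:
  assumes tf: "top_field TYPE('k::{field,t2_space})" and j': "j' \<in> idx n \<beta>"
  shows "continuous_map (subtopology (Kn (n + absm n \<beta>)) (Ugt n L \<beta>)) euclidean
           (\<lambda>y::nat \<Rightarrow> 'k. dd_weight n \<beta> y j')"
proof -
  let ?X = "subtopology (Kn (n + absm n \<beta>)) (Ugt n L \<beta>)"
  have add: "continuous_on UNIV (\<lambda>p::'k \<times> 'k. fst p + snd p)"
    and mult: "continuous_on UNIV (\<lambda>p::'k \<times> 'k. fst p * snd p)"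
    and uminus: "continuous_map euclidean euclidean (\<lambda>x::'k. - x)"
    and inverse: "continuous_map (subtopology euclidean (UNIV - {0})) euclidean (inverse :: 'k \<Rightarrow> 'k)"
    using tf by (simp_all add: top_field_def)
  have "continuous_map ?X euclidean (\<lambda>y::nat \<Rightarrow> 'k. inverse (y (bpos \<beta> l a) - y (bpos \<beta> l b)))"
    if "l < n" "a \<le> \<beta> l" "b \<le> \<beta> l" "a \<noteq> b" for l a b
  proof -
    have coord: "continuous_map ?X euclidean (\<lambda>y::nat \<Rightarrow> 'k. y (bpos \<beta> l c))" if "c \<le> \<beta> l" for c
      using that \<open>l < n\<close> bpos_less[of l n c \<beta>] by (simp add: continuous_map_Kn_coordinate)
    have "continuous_map ?X euclidean (\<lambda>y::nat \<Rightarrow> 'k. - y (bpos \<beta> l b))"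
      using continuous_map_compose[OF coord[OF \<open>b \<le> \<beta> l\<close>] uminus] by (simp add: o_def)
    then have "continuous_map ?X euclidean (\<lambda>y::nat \<Rightarrow> 'k. y (bpos \<beta> l a) + - y (bpos \<beta> l b))"
      by (rule continuous_map_binop[OF add coord[OF \<open>a \<le> \<beta> l\<close>]])
    then have "continuous_map ?X (subtopology euclidean (UNIV - {0}))
        (\<lambda>y::nat \<Rightarrow> 'k. y (bpos \<beta> l a) - y (bpos \<beta> l b))"
      using that by (intro continuous_map_into_subtopology) (auto simp: Ugt_def)
    from continuous_map_compose[OF this inverse] show ?thesis by (simp add: o_def)
  qed
  then show ?thesis
    unfolding dd_weight_def using j'
    by (intro continuous_map_prod_of_continuous_mult[OF mult]) (auto simp: mem_idx_iff)
qed

lemma continuous_map_ddiff: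
  fixes smul :: "'k::{field,t2_space} \<Rightarrow> 'f::{ab_group_add,t2_space} \<Rightarrow> 'f"
  assumes tf: "top_field TYPE('k)" and tvs: "top_vector_space smul"
    and g: "continuous_map (subtopology (Kn n) L) euclidean g"
  shows "continuous_map (subtopology (Kn (n + absm n \<beta>)) (Ugt n L \<beta>)) euclidean (ddiff smul n \<beta> g)"
proof -
  let ?X = "subtopology (Kn (n + absm n \<beta>)) (Ugt n L \<beta>)"
  have "continuous_map ?X (subtopology (Kn n) L) (\<lambda>y. pick n \<beta> y j')" if "j' \<in> idx n \<beta>" for j'
    using continuous_map_from_subtopology[OF continuous_map_pick[OF that]] that
    by (intro continuous_map_into_subtopology) (auto simp: Ugt_def Ulow_def)
  from continuous_map_compose[OF this g]
  have value_cont: "continuous_map ?X euclidean (\<lambda>y. g (pick n \<beta> y j'))" if "j' \<in> idx n \<beta>" for j'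
    using that by (simp add: o_def)
  have ddiff_eq: "ddiff smul n \<beta> g = (\<lambda>y. \<Sum>j'\<in>idx n \<beta>. smul (dd_weight n \<beta> y j') (g (pick n \<beta> y j')))"
    by (simp add: fun_eq_iff ddiff_dd_weight)
  show ?thesis
    unfolding ddiff_eq
  proof (rule continuous_map_sum_of_continuous_add)
    show "continuous_on UNIV (\<lambda>p::'f \<times> 'f. fst p + snd p)"
      using tvs by (simp add: top_vector_space_def)
    fix j' assume "j' \<in> idx n \<beta>"
    then show "continuous_map ?X euclidean (\<lambda>y. smul (dd_weight n \<beta> y j') (g (pick n \<beta> y j')))"
      using tvs continuous_map_dd_weight[OF tf] value_cont unfolding top_vector_space_def
      by (intro continuous_map_binop[where h = smul]) auto
  qed simp
qed

section \<open>Density of points with distinct coordinates\<close>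

lemma top_field_open_infinite:
  assumes tf: "top_field TYPE('k::{field,t2_space})" and S: "open (S::'k set)" "S \<noteq> {}"
  shows "infinite S"
proof
  assume "finite S"
  obtain a where a: "a \<in> S" using S by auto
  have "open (S - (S - {a}))"
    using \<open>finite S\<close> S by (intro open_Diff finite_imp_closed) auto
  moreover have "S - (S - {a}) = {a}" using a by auto
  ultimately have "open {a}" by simp
  have "continuous_on UNIV (\<lambda>p::'k \<times> 'k. fst p + snd p)"
    using tf by (simp add: top_field_def)
  then have "continuous_map euclidean euclidean (\<lambda>x::'k. x + a)"
    using continuous_map_binop[OF _ continuous_map_id, of "\<lambda>x y. x + y" "\<lambda>_. a"] by simp
  from openin_continuous_map_preimage[OF this, of "{a}"] \<open>open {a}\<close> have "open {0::'k}"
    by simp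
  then show False using tf by (simp add: top_field_def)
qed

lemma ex_inj_on_PiE:
  assumes "finite I" "\<And>i. i \<in> I \<Longrightarrow> infinite (S i)"
  shows "\<exists>z\<in>PiE I S. inj_on z I"
  using assms
proof (induction I rule: finite_induct)
  case (insert a I)
  then obtain z where z: "z \<in> PiE I S" "inj_on z I" by auto
  have "infinite (S a - z ` I)" using insert by (simp add: Diff_infinite_finite)
  then obtain v where v: "v \<in> S a" "v \<notin> z ` I" by (metis Diff_iff finite.emptyI ex_in_conv)
  have "z(a := v) \<in> PiE (insert a I) S" "inj_on (z(a := v)) (insert a I)"
    using z v insert.hyps by (auto simp: PiE_iff extensional_def inj_on_def)
  then show ?case by blast
qed auto

lemma openin_Kn_box:
  assumes "openin (Kn N) W" "y \<in> W"
  obtains V where "\<And>p. p < N \<Longrightarrow> open (V p) \<and> y p \<in> V p" "PiE {..<N} V \<subseteq> W"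
proof -
  obtain V where V: "\<forall>i\<in>{..<N}. open (V i)" "y \<in> PiE {..<N} V" "PiE {..<N} V \<subseteq> W"
    using assms unfolding Kn_def openin_product_topology_alt by (metis open_openin)
  then show thesis by (intro that[of V]) (auto simp: PiE_iff)
qed

lemma openin_Ulow:
  assumes "openin (Kn d) U"
  shows "openin (Kn (d + absm d \<alpha>)) (Ulow d U \<alpha>)"
proof -
  have "Ulow d U \<alpha> = (\<Inter>j\<in>idx d \<alpha>. {x \<in> topspace (Kn (d + absm d \<alpha>)). pick d \<alpha> x j \<in> U})
      \<inter> topspace (Kn (d + absm d \<alpha>))"
    by (auto simp: Ulow_def)
  also have "openin (Kn (d + absm d \<alpha>)) \<dots>"
    using assms
    by (intro openin_INT finite_idx openin_continuous_map_preimage[OF continuous_map_pick]) auto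
  finally show ?thesis .
qed

lemma mem_Ulow_PiE:
  assumes "U = PiE {..<d} Us"
  shows "x \<in> Ulow d U \<gamma> \<longleftrightarrow> x \<in> topspace (Kn (d + absm d \<gamma>)) \<and> (\<forall>i<d. \<forall>k\<le>\<gamma> i. x (bpos \<gamma> i k) \<in> Us i)"
proof -
  have "pick d \<gamma> x j \<in> U \<longleftrightarrow> (\<forall>i<d. x (bpos \<gamma> i (j i)) \<in> Us i)" for j
    using assms by (auto simp: pick_def PiE_iff)
  moreover have "(\<forall>j\<in>idx d \<gamma>. \<forall>i<d. x (bpos \<gamma> i (j i)) \<in> Us i) \<longleftrightarrow> (\<forall>i<d. \<forall>k\<le>\<gamma> i. x (bpos \<gamma> i k) \<in> Us i)"
  proof safe
    fix i k assume "\<forall>j\<in>idx d \<gamma>. \<forall>i<d. x (bpos \<gamma> i (j i)) \<in> Us i" "i < d" "k \<le> \<gamma> i"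
    moreover have "restrict ((\<lambda>_. 0)(i := k)) {..<d} \<in> idx d \<gamma>"
      using \<open>k \<le> \<gamma> i\<close> by (auto simp: mem_idx_iff)
    ultimately show "x (bpos \<gamma> i k) \<in> Us i" by fastforce
  qed (auto simp: mem_idx_iff)
  ultimately show ?thesis by (simp add: Ulow_def)
qed

lemma Ulow_PiE_infinite_box:
  fixes Us :: "nat \<Rightarrow> 'k::{field,t2_space} set"
  assumes tf: "top_field TYPE('k)" and U: "U = PiE {..<d} Us"
    and dense: "\<And>i. i < d \<Longrightarrow> Us i \<subseteq> closure (interior (Us i))"
    and y: "y \<in> Ulow d U \<gamma>" and V: "\<And>p. p < d + absm d \<gamma> \<Longrightarrow> open (V p) \<and> y p \<in> V p"
  shows "\<exists>S. (\<forall>p<d + absm d \<gamma>. infinite (S p) \<and> S p \<subseteq> V p) \<and> PiE {..<d + absm d \<gamma>} S \<subseteq> Ulow d U \<gamma>"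
proof -
  define N where "N = d + absm d \<gamma>"
  have "\<exists>S. infinite S \<and> S \<subseteq> V p \<and> (\<forall>i<d. \<forall>k\<le>\<gamma> i. p = bpos \<gamma> i k \<longrightarrow> S \<subseteq> Us i)"
    if p: "p \<in> {..<N}" for p
  proof -
    have "p \<in> (\<lambda>(i, k). bpos \<gamma> i k) ` (SIGMA i:{..<d}. {..\<gamma> i})"
      using p bij_betw_imp_surj_on[OF bij_betw_bpos] by (simp add: N_def)
    then obtain i k where ik: "i < d" "k \<le> \<gamma> i" "p = bpos \<gamma> i k" by auto
    have Vp: "open (V p)" "y p \<in> V p" using V p by (auto simp: N_def)
    have "y p \<in> closure (interior (Us i))" using y ik dense U by (auto simp: mem_Ulow_PiE)
    then have "V p \<inter> interior (Us i) \<noteq> {}"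
      using open_Int_closure_eq_empty[OF Vp(1), of "interior (Us i)"] Vp(2) by auto
    then have "infinite (V p \<inter> interior (Us i))"
      using Vp(1) by (intro top_field_open_infinite[OF tf]) auto
    moreover have "V p \<inter> interior (Us i) \<subseteq> Us i'" if "i' < d" "k' \<le> \<gamma> i'" "p = bpos \<gamma> i' k'" for i' k'
    proof -
      have "i' = i" using bpos_inj[of k' \<gamma> i' k i] ik that by simp
      then show ?thesis using interior_subset by blast
    qed
    ultimately show ?thesis by (intro exI[of _ "V p \<inter> interior (Us i)"]) blast
  qed
  then obtain S where S: "\<And>p. p \<in> {..<N} \<Longrightarrow> infinite (S p) \<and> S p \<subseteq> V p \<and> (\<forall>i<d. \<forall>k\<le>\<gamma> i. p = bpos \<gamma> i k \<longrightarrow> S p \<subseteq> Us i)"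
    by metis
  have "z \<in> Ulow d U \<gamma>" if z: "z \<in> PiE {..<N} S" for z
    unfolding mem_Ulow_PiE[OF U]
  proof (intro conjI allI impI)
    show "z \<in> topspace (Kn (d + absm d \<gamma>))" using z by (simp add: Kn_def N_def PiE_iff)
    fix i k assume ik: "i < d" "k \<le> \<gamma> i"
    then have p: "bpos \<gamma> i k \<in> {..<N}" using bpos_less by (simp add: N_def)
    then have "S (bpos \<gamma> i k) \<subseteq> Us i" using S ik by simp
    then show "z (bpos \<gamma> i k) \<in> Us i" using PiE_mem[OF z p] by blast
  qed
  then show ?thesis using S by (intro exI[of _ S]) (auto simp: N_def)
qed

lemma Ulow_subset_closure_inj:
  fixes U :: "(nat \<Rightarrow> 'k::{field,t2_space}) set"
  assumes tf: "top_field TYPE('k)" and adm: "admissible_domain d U"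
  shows "Ulow d U \<gamma> \<subseteq> Kn (d + absm d \<gamma>) closure_of {z \<in> Ulow d U \<gamma>. inj_on z {..<d + absm d \<gamma>}}"
proof
  let ?N = "d + absm d \<gamma>"
  fix y assume y: "y \<in> Ulow d U \<gamma>"
  have "\<exists>z\<in>T. z \<in> Ulow d U \<gamma> \<and> inj_on z {..<?N}" if T: "openin (Kn ?N) T" "y \<in> T" for T
  proof -
    obtain S where S: "\<And>p. p < ?N \<Longrightarrow> infinite (S p)" "PiE {..<?N} S \<subseteq> T \<inter> Ulow d U \<gamma>"
    proof -
      from adm consider (open_domain) "openin (Kn d) U"
        | (product_domain) Us where "U = PiE {..<d} Us" "\<And>i. i < d \<Longrightarrow> Us i \<subseteq> closure (interior (Us i))"
        unfolding admissible_domain_def by blast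
      then show thesis
      proof cases
        case open_domain
        have "openin (Kn ?N) (T \<inter> Ulow d U \<gamma>)"
          using T(1) openin_Ulow[OF open_domain] by (simp add: openin_Int)
        moreover have "y \<in> T \<inter> Ulow d U \<gamma>" using T(2) y by blast
        ultimately obtain V where V: "\<And>p. p < ?N \<Longrightarrow> open (V p) \<and> y p \<in> V p"
          "PiE {..<?N} V \<subseteq> T \<inter> Ulow d U \<gamma>"
          by (rule openin_Kn_box) blast
        have "infinite (V p)" if "p < ?N" for p
          using V(1)[OF that] by (intro top_field_open_infinite[OF tf]) auto
        then show thesis using V(2) by (rule that)
      next
        case product_domain
        obtain V where V: "\<And>p. p < ?N \<Longrightarrow> open (V p) \<and> y p \<in> V p" "PiE {..<?N} V \<subseteq> T"
          by (rule openin_Kn_box[OF T]) blast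
        obtain S' where S': "\<forall>p<?N. infinite (S' p) \<and> S' p \<subseteq> V p" "PiE {..<?N} S' \<subseteq> Ulow d U \<gamma>"
          using Ulow_PiE_infinite_box[OF tf product_domain y V(1)] by blast
        have "PiE {..<?N} S' \<subseteq> PiE {..<?N} V"
          using S'(1) by (intro PiE_mono) simp
        then have "PiE {..<?N} S' \<subseteq> T" using V(2) by (rule order_trans)
        then have sub: "PiE {..<?N} S' \<subseteq> T \<inter> Ulow d U \<gamma>" using S'(2) by (rule Int_greatest)
        have inf: "infinite (S' p)" if "p < ?N" for p using S'(1) that by simp
        show thesis by (rule that[OF inf sub])
      qed
    qed
    obtain z where "z \<in> PiE {..<?N} S" "inj_on z {..<?N}"
      using ex_inj_on_PiE[of "{..<?N}" S] S(1) by auto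
    then show ?thesis using S(2) by blast
  qed
  moreover have "y \<in> topspace (Kn ?N)" using y by (simp add: Ulow_def)
  ultimately show "y \<in> Kn ?N closure_of {z \<in> Ulow d U \<gamma>. inj_on z {..<?N}}"
    unfolding in_closure_of by blast
qed

lemma Ugt_if_inj_on:
  assumes "z \<in> Ulow d U \<alpha>" "inj_on z {..<d + absm d \<alpha>}"
  shows "z \<in> Ugt d U \<alpha>"
  unfolding Ugt_def
proof (intro CollectI conjI allI impI assms(1))
  fix i a b assume "i < d" "a \<le> \<alpha> i" "b \<le> \<alpha> i" "a \<noteq> b"
  then show "z (bpos \<alpha> i a) \<noteq> z (bpos \<alpha> i b)"
    using inj_onD[OF assms(2), of "bpos \<alpha> i a" "bpos \<alpha> i b"] bpos_less[of i d _ \<alpha>] bpos_inj[of a \<alpha> i b i]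
    by auto
qed

lemma inj_on_pick:
  assumes "inj_on z {..<n + absm n \<beta>}" "j' \<in> idx n \<beta>"
  shows "inj_on (pick n \<beta> z j') {..<n}"
proof (rule inj_onI)
  fix p q assume pq: "p \<in> {..<n}" "q \<in> {..<n}" "pick n \<beta> z j' p = pick n \<beta> z j' q"
  have "j' p \<le> \<beta> p" "j' q \<le> \<beta> q" using assms(2) pq by (auto simp: mem_idx_iff)
  moreover from this have "bpos \<beta> p (j' p) = bpos \<beta> q (j' q)"
    using inj_onD[OF assms(1)] bpos_less[of p n "j' p" \<beta>] bpos_less[of q n "j' q" \<beta>] pq
    by (auto simp: pick_def)
  ultimately show "p = q" using bpos_inj[of "j' p" \<beta> p "j' q" q] by simp
qed

section \<open>Continuous extensions of divided differences\<close>

lemma Hausdorff_space_euclidean_t2: "Hausdorff_space (euclidean :: 'a::t2_space topology)"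
proof (unfold Hausdorff_space_def disjnt_def, intro allI impI)
  fix x y :: 'a assume "x \<in> topspace euclidean \<and> y \<in> topspace euclidean \<and> x \<noteq> y"
  then have "x \<noteq> y" by simp
  from hausdorff[OF this] obtain U V where UV: "open U" "open V" "x \<in> U" "y \<in> V" "U \<inter> V = {}"
    by blast
  show "\<exists>U V. openin euclidean U \<and> openin euclidean V \<and> x \<in> U \<and> y \<in> V \<and> U \<inter> V = {}"
    using UV by (intro exI[of _ U] exI[of _ V]) (simp add: open_openin[symmetric])
qed

lemma continuous_map_eq_on_closure:
  fixes g\<^sub>1 g\<^sub>2 :: "'a \<Rightarrow> 'b::t2_space"
  assumes "continuous_map (subtopology X L) euclidean g\<^sub>1" "continuous_map (subtopology X L) euclidean g\<^sub>2"
    and "L \<subseteq> X closure_of S" "S \<subseteq> L" "\<And>z. z \<in> S \<Longrightarrow> g\<^sub>1 z = g\<^sub>2 z" "x \<in> L"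
  shows "g\<^sub>1 x = g\<^sub>2 x"
proof (rule forall_in_closure_of_eq[OF _ Hausdorff_space_euclidean_t2 assms(1,2,5)])
  show "x \<in> subtopology X L closure_of S"
    using assms(3,4,6) by (auto simp: closure_of_subtopology Int_absorb1)
qed

lemma is_sds_ext_unique:
  fixes smul :: "'k::{field,topological_space} \<Rightarrow> 'f::{ab_group_add,t2_space} \<Rightarrow> 'f"
  assumes "Ulow d U \<alpha> \<subseteq> Kn (d + absm d \<alpha>) closure_of {z \<in> Ulow d U \<alpha>. inj_on z {..<d + absm d \<alpha>}}"
    and "is_sds_ext smul d U \<alpha> f h\<^sub>1" "is_sds_ext smul d U \<alpha> f h\<^sub>2" "x \<in> Ulow d U \<alpha>"
  shows "h\<^sub>1 x = h\<^sub>2 x"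
proof (rule continuous_map_eq_on_closure[OF _ _ assms(1) _ _ assms(4)])
  show "continuous_map (subtopology (Kn (d + absm d \<alpha>)) (Ulow d U \<alpha>)) euclidean h\<^sub>1"
    "continuous_map (subtopology (Kn (d + absm d \<alpha>)) (Ulow d U \<alpha>)) euclidean h\<^sub>2"
    using assms(2,3) by (simp_all add: is_sds_ext_def)
  fix z assume "z \<in> {z \<in> Ulow d U \<alpha>. inj_on z {..<d + absm d \<alpha>}}"
  then have "z \<in> Ugt d U \<alpha>" using Ugt_if_inj_on by blast
  then show "h\<^sub>1 z = h\<^sub>2 z" using assms(2,3) by (simp add: is_sds_ext_def)
qed blast

lemma is_sds_ext_mcomp_eq_ddiff:
  assumes vs: "vector_space smul"
    and g: "is_sds_ext smul d U \<alpha> f g" and h: "is_sds_ext smul d U (mcomp \<alpha> \<beta>) f h"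
    and z: "z \<in> Ulow d U (mcomp \<alpha> \<beta>)" "inj_on z {..<d + absm d (mcomp \<alpha> \<beta>)}"
  shows "h z = ddiff smul (d + absm d \<alpha>) \<beta> g z"
proof -
  define n where "n = d + absm d \<alpha>"
  have "z \<in> Ugt d U (mcomp \<alpha> \<beta>)" using Ugt_if_inj_on z by blast
  then have "h z = ddiff smul d (mcomp \<alpha> \<beta>) f z" using h by (simp add: is_sds_ext_def)
  also have "\<dots> = ddiff smul n \<beta> g z"
    unfolding n_def
  proof (rule ddiff_ddiff[OF vs z(2), symmetric])
    fix j' assume j': "j' \<in> idx (d + absm d \<alpha>) \<beta>"
    have "z \<in> Ulow n (Ulow d U \<alpha>) \<beta>" using z by (simp add: n_def Ulow_mcomp)
    then have "pick n \<beta> z j' \<in> Ulow d U \<alpha>"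
      using j'[folded n_def] unfolding Ulow_def[of n "Ulow d U \<alpha>" \<beta>] by blast
    moreover have "inj_on (pick n \<beta> z j') {..<n}"
      using inj_on_pick[of z n \<beta> j'] z j' by (simp add: n_def dim_mcomp)
    ultimately have "pick n \<beta> z j' \<in> Ugt d U \<alpha>" using Ugt_if_inj_on by (simp add: n_def)
    then show "g (pick (d + absm d \<alpha>) \<beta> z j') = ddiff smul d \<alpha> f (pick (d + absm d \<alpha>) \<beta> z j')"
      using g by (simp add: is_sds_ext_def n_def)
  qed
  finally show ?thesis by (simp add: n_def)
qed

lemma is_sds_ext_mcomp:
  fixes smul :: "'k::{field,t2_space} \<Rightarrow> 'f::{ab_group_add,t2_space} \<Rightarrow> 'f"
  assumes tf: "top_field TYPE('k)" and tvs: "top_vector_space smul" and adm: "admissible_domain d U"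
    and g: "is_sds_ext smul d U \<alpha> f g" and h: "is_sds_ext smul d U (mcomp \<alpha> \<beta>) f h"
  shows "is_sds_ext smul (d + absm d \<alpha>) (Ulow d U \<alpha>) \<beta> g h"
proof -
  define n where "n = d + absm d \<alpha>"
  define \<gamma> where "\<gamma> = mcomp \<alpha> \<beta>"
  define N where "N = d + absm d \<gamma>"
  let ?S = "{z \<in> Ulow d U \<gamma>. inj_on z {..<N}}"
  have UL: "Ulow n (Ulow d U \<alpha>) \<beta> = Ulow d U \<gamma>" and dim: "n + absm n \<beta> = N"
    by (simp_all add: n_def \<gamma>_def N_def Ulow_mcomp dim_mcomp)
  have h_cont: "continuous_map (subtopology (Kn N) (Ulow d U \<gamma>)) euclidean h"
    using h by (simp add: is_sds_ext_def N_def \<gamma>_def)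
  have Ugt_sub: "Ugt n (Ulow d U \<alpha>) \<beta> \<subseteq> Ulow d U \<gamma>"
    using UL by (auto simp: Ugt_def)
  have S_sub: "?S \<subseteq> Ugt n (Ulow d U \<alpha>) \<beta>"
    using Ugt_if_inj_on[of _ n "Ulow d U \<alpha>" \<beta>] UL dim by auto
  have agree: "h z = ddiff smul n \<beta> g z" if "z \<in> ?S" for z
    using is_sds_ext_mcomp_eq_ddiff[OF _ g h] tvs that by (simp add: top_vector_space_def n_def \<gamma>_def N_def)
  have "h y = ddiff smul n \<beta> g y" if y: "y \<in> Ugt n (Ulow d U \<alpha>) \<beta>" for y
  proof (rule continuous_map_eq_on_closure[OF _ _ _ S_sub agree y])
    show "continuous_map (subtopology (Kn N) (Ugt n (Ulow d U \<alpha>) \<beta>)) euclidean h"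
      by (rule continuous_map_from_subtopology_mono[OF h_cont Ugt_sub])
    show "continuous_map (subtopology (Kn N) (Ugt n (Ulow d U \<alpha>) \<beta>)) euclidean (ddiff smul n \<beta> g)"
      using continuous_map_ddiff[OF tf tvs, of n "Ulow d U \<alpha>" g \<beta>] g dim by (simp add: is_sds_ext_def n_def)
    show "Ugt n (Ulow d U \<alpha>) \<beta> \<subseteq> Kn N closure_of ?S"
      using Ugt_sub Ulow_subset_closure_inj[OF tf adm, of \<gamma>] by (simp add: N_def)
  qed
  then show ?thesis
    using h_cont by (simp add: is_sds_ext_def n_def[symmetric] UL dim)
qed

lemma is_sds_ext_sds_ext:
  assumes "is_sds_ext smul d U \<alpha> f h"
  shows "is_sds_ext smul d U \<alpha> f (sds_ext smul d U \<alpha> f)"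
  unfolding sds_ext_def by (rule someI[of "is_sds_ext smul d U \<alpha> f", OF assms])

lemma CkSDS_is_sds_ext:
  "CkSDS smul d U k f \<Longrightarrow> absm d \<alpha> \<le> k \<Longrightarrow> is_sds_ext smul d U \<alpha> f (sds_ext smul d U \<alpha> f)"
  unfolding CkSDS_def using is_sds_ext_sds_ext by blast

lemma CkSDS_sds_ext:
  fixes smul :: "'k::{field,t2_space} \<Rightarrow> 'f::{ab_group_add,t2_space} \<Rightarrow> 'f"
  assumes "top_field TYPE('k)" "top_vector_space smul" "admissible_domain d U"
    and C: "CkSDS smul d U k f" and "absm d \<alpha> \<le> k"
  shows "CkSDS smul (d + absm d \<alpha>) (Ulow d U \<alpha>) (k - absm d \<alpha>) (sds_ext smul d U \<alpha> f)"
  unfolding CkSDS_def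
proof (intro allI impI)
  fix \<beta> assume "absm (d + absm d \<alpha>) \<beta> \<le> k - absm d \<alpha>"
  then have "absm d (mcomp \<alpha> \<beta>) \<le> k" using \<open>absm d \<alpha> \<le> k\<close> by (simp add: absm_mcomp)
  then show "\<exists>h. is_sds_ext smul (d + absm d \<alpha>) (Ulow d U \<alpha>) \<beta> (sds_ext smul d U \<alpha> f) h"
    using is_sds_ext_mcomp[OF assms(1-3) CkSDS_is_sds_ext[OF C \<open>absm d \<alpha> \<le> k\<close>] CkSDS_is_sds_ext[OF C]]
    by blast
qed

lemma sds_ext_sds_ext:
  fixes smul :: "'k::{field,t2_space} \<Rightarrow> 'f::{ab_group_add,t2_space} \<Rightarrow> 'f"
  assumes tf: "top_field TYPE('k)" and tvs: "top_vector_space smul" and adm: "admissible_domain d U"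
    and C: "CkSDS smul d U k f" and k: "absm d (mcomp \<alpha> \<beta>) \<le> k"
    and x: "x \<in> Ulow d U (mcomp \<alpha> \<beta>)"
  shows "sds_ext smul (d + absm d \<alpha>) (Ulow d U \<alpha>) \<beta> (sds_ext smul d U \<alpha> f) x
       = sds_ext smul d U (mcomp \<alpha> \<beta>) f x"
proof -
  have "absm d \<alpha> \<le> k" using k by (simp add: absm_mcomp)
  have ext: "is_sds_ext smul (d + absm d \<alpha>) (Ulow d U \<alpha>) \<beta> (sds_ext smul d U \<alpha> f) (sds_ext smul d U (mcomp \<alpha> \<beta>) f)"
    by (rule is_sds_ext_mcomp[OF tf tvs adm CkSDS_is_sds_ext[OF C \<open>absm d \<alpha> \<le> k\<close>] CkSDS_is_sds_ext[OF C k]])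
  show ?thesis
  proof (rule is_sds_ext_unique[OF _ is_sds_ext_sds_ext[OF ext] ext])
    show "Ulow (d + absm d \<alpha>) (Ulow d U \<alpha>) \<beta> \<subseteq> Kn (d + absm d \<alpha> + absm (d + absm d \<alpha>) \<beta>) closure_of
        {z \<in> Ulow (d + absm d \<alpha>) (Ulow d U \<alpha>) \<beta>. inj_on z {..<d + absm d \<alpha> + absm (d + absm d \<alpha>) \<beta>}}"
      unfolding Ulow_mcomp dim_mcomp by (rule Ulow_subset_closure_inj[OF tf adm])
    show "x \<in> Ulow (d + absm d \<alpha>) (Ulow d U \<alpha>) \<beta>" using x by (simp add: Ulow_mcomp)
  qed
qed

lemma C0sigma_cong:
  assumes "\<And>x. x \<in> V \<Longrightarrow> g\<^sub>1 x = g\<^sub>2 x" "C0sigma absv smul n \<sigma> V g\<^sub>1"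
  shows "C0sigma absv smul n \<sigma> V g\<^sub>2"
  using assms unfolding C0sigma_def by (metis IntD2)

theorem lemma2p4:
  fixes smul :: "'k::{field,t2_space} \<Rightarrow> 'f::{ab_group_add,t2_space} \<Rightarrow> 'f"
    and d k :: nat and U :: "(nat \<Rightarrow> 'k) set" and f :: "(nat \<Rightarrow> 'k) \<Rightarrow> 'f"
  assumes "top_field TYPE('k)"
    and "top_vector_space smul"
    and "d \<ge> 1"
    and "admissible_domain d U"
  shows "(CkSDS smul d U k f \<longrightarrow>
            (\<forall>\<alpha>. absm d \<alpha> \<le> k \<longrightarrow>
               CkSDS smul (d + absm d \<alpha>) (Ulow d U \<alpha>) (k - absm d \<alpha>) (sds_ext smul d U \<alpha> f)))
       \<and> (\<forall>absv \<sigma>. valued_field absv \<and> \<sigma> > 0 \<and> CksigmaSDS absv smul d U k \<sigma> f \<longrightarrow>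
            (\<forall>\<alpha>. absm d \<alpha> \<le> k \<longrightarrow>
               CksigmaSDS absv smul (d + absm d \<alpha>) (Ulow d U \<alpha>) (k - absm d \<alpha>) \<sigma> (sds_ext smul d U \<alpha> f)))"
proof (intro conjI allI impI)
  fix \<alpha> assume "CkSDS smul d U k f" "absm d \<alpha> \<le> k"
  then show "CkSDS smul (d + absm d \<alpha>) (Ulow d U \<alpha>) (k - absm d \<alpha>) (sds_ext smul d U \<alpha> f)"
    by (rule CkSDS_sds_ext[OF assms(1,2,4)])
next
  fix absv \<sigma> \<alpha>
  assume "valued_field absv \<and> \<sigma> > 0 \<and> CksigmaSDS absv smul d U k \<sigma> f" and \<alpha>: "absm d \<alpha> \<le> k"
  then have C: "CkSDS smul d U k f"
    and hoelder: "\<And>\<gamma>. absm d \<gamma> \<le> k \<Longrightarrow> C0sigma absv smul (d + absm d \<gamma>) \<sigma> (Ulow d U \<gamma>) (sds_ext smul d U \<gamma> f)"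
    by (simp_all add: CksigmaSDS_def)
  have "C0sigma absv smul (d + absm d \<alpha> + absm (d + absm d \<alpha>) \<beta>) \<sigma> (Ulow (d + absm d \<alpha>) (Ulow d U \<alpha>) \<beta>)
      (sds_ext smul (d + absm d \<alpha>) (Ulow d U \<alpha>) \<beta> (sds_ext smul d U \<alpha> f))"
    if "absm (d + absm d \<alpha>) \<beta> \<le> k - absm d \<alpha>" for \<beta>
  proof -
    have k: "absm d (mcomp \<alpha> \<beta>) \<le> k" using that \<alpha> by (simp add: absm_mcomp)
    show ?thesis
      unfolding Ulow_mcomp dim_mcomp
      by (rule C0sigma_cong[OF sds_ext_sds_ext[OF assms(1,2,4) C k, symmetric] hoelder[OF k]])
  qed
  then show "CksigmaSDS absv smul (d + absm d \<alpha>) (Ulow d U \<alpha>) (k - absm d \<alpha>) \<sigma> (sds_ext smul d U \<alpha> f)"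
    using CkSDS_sds_ext[OF assms(1,2,4) C \<alpha>] by (simp add: CksigmaSDS_def)
qed

end
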